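(* Let $K,n,L\in\mathbb{N}_+$, $N=nK$, $d=N$, and let $X\in\mathbb{R}^{d\times d}$ be orthogonal and $Y=I_K\otimes\mathbf{1}_n^\top\in\mathbb{R}^{K\times N}$. Let $W_l\in\mathbb{R}^{d\times d}$ for $l\in[L-1]$ and $W_L\in\mathbb{R}^{K\times d}$ satisfy $W_{L:1}X=Y$, and suppose there is $\varepsilon>0$ with $$\varepsilon\le\min\Big\{\frac{n^{1/(2L)}}{\sqrt{30}\,L\,(d-K)^{1/4}},\ \frac{(n/2)^{1/(4L)}}{(d-K)^{1/4}},\ \frac{1}{\sqrt{2(\sqrt K+1)}}\Big\}$$ such that $W_{l+1}^\top W_{l+1}=W_lW_l^\top$ for all $l\in[L-2]$ and $\|W_L^\top W_L-W_{L-1}W_{L-1}^\top\|_F\le\varepsilon^2\sqrt{d-K}$. Then for all $l\in[L]$, $$\big(\sqrt{n/2}\big)^{1/L}\le\sigma_K(W_l)\le\sigma_1(W_l)\le\big(\sqrt{2n}\big)^{1/L}.$$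
   Context: $W_{L:1}=W_L\cdots W_1$; $\sigma_i(A)$ denotes the $i$-th largest singular value of $A$; $\mathbf{1}_n$ is the all-ones vector in $\mathbb{R}^n$ and $\otimes$ the Kronecker product (so $Y$ is the one-hot label matrix of $K$ balanced classes with $n$ samples each, ordered by class). We assume $d>K$. *)

theory Defs
  imports "Jordan_Normal_Form.Char_Poly" "HOL-Computational_Algebra.Polynomial"
    "HOL-Library.Multiset" Complex_Main
begin

definition singular_values :: "real mat \<Rightarrow> real list" where
  "singular_values A =
     rev (sorted_list_of_multiset (image_mset sqrt (proots (char_poly (transpose_mat A * A)))))"

text \<open>sigma i A = i-th largest singular value (1-based).\<close>
definition sigma :: "nat \<Rightarrow> real mat \<Rightarrow> real" where
  "sigma i A = singular_values A ! (i - 1)"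

definition frob_norm :: "real mat \<Rightarrow> real" where
  "frob_norm A = sqrt (\<Sum>i<dim_row A. \<Sum>j<dim_col A. (A $$ (i, j))^2)"

fun wprod :: "(nat \<Rightarrow> real mat) \<Rightarrow> nat \<Rightarrow> nat \<Rightarrow> real mat" where
  "wprod W 0 d = 1\<^sub>m d"
| "wprod W (Suc l) d = W (Suc l) * wprod W l d"

text \<open>Label matrix Y = I_K \<otimes> 1_n^T (K x nK), samples ordered by class.\<close>
definition label_mat :: "nat \<Rightarrow> nat \<Rightarrow> real mat" where
  "label_mat K n = mat K (n * K) (\<lambda>(i, j). if j div n = i then 1 else 0)"

definition orthogonal_mat :: "nat \<Rightarrow> real mat \<Rightarrow> bool" where
  "orthogonal_mat d X \<longleftrightarrow> X \<in> carrier_mat d d \<and> transpose_mat X * X = 1\<^sub>m d"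

end

(*
  Everything is read off the Gram matrices W_l^T W_l. Since singular values are defined through
  the characteristic polynomial of A^T A, the first step is the spectral theorem for real
  symmetric matrices (by induction, splitting off a unit eigenvector with a Householder
  reflection); it turns bounds on |A x|^2 into bounds on singular values (a Courant-Fischer
  counting argument for the lower bound).

  Let mu be the top eigenvalue of W_1^T W_1 with unit eigenvector x. Balancedness
  W_(l+1)^T W_(l+1) = W_l W_l^T propagates both |W_l|^2 <= mu and the eigenvector:
  |W_(l:1) x|^2 = mu^l for l < L. The last layer is balanced up to a Frobenius error e, so
  |W_L|^2 <= mu + e and |W_(L:1) x|^2 >= mu^(L-1) (mu - e). As W_(L:1) X = Y with X orthogonal,
  W_(L:1) W_(L:1)^T = Y Y^T = n I, hence mu^(L-1) (mu - e) <= n and mu <= n^(1/L) + e; the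
  smallness of epsilon gives e <= n^(1/L) / (30 L^2), which yields the upper bound. On the
  K-dimensional range of W_(L:1)^T the full product scales squared norms by exactly n, while
  every layer other than W_l expands them by at most mu (or mu + e); so on the range of
  W_(l-1:1) W_(L:1)^T the layer W_l expands squared norms by at least
  n / ((mu + e) mu^(L-2)) >= (n/2)^(1/L).
*)
theory Submission
  imports Defs "Jordan_Normal_Form.Spectral_Radius"
begin

abbreviation sq_norm :: "real vec \<Rightarrow> real" where
  "sq_norm v \<equiv> v \<bullet> v"

definition sq_opnorm_le :: "real mat \<Rightarrow> real \<Rightarrow> bool" where
  "sq_opnorm_le A c \<longleftrightarrow> (\<forall>x \<in> carrier_vec (dim_col A). sq_norm (A *\<^sub>v x) \<le> c * sq_norm x)"

lemma sq_opnorm_leI: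
  assumes "A \<in> carrier_mat r d" and "\<And>x. x \<in> carrier_vec d \<Longrightarrow> sq_norm (A *\<^sub>v x) \<le> c * sq_norm x"
  shows "sq_opnorm_le A c"
  using assms unfolding sq_opnorm_le_def by auto

lemma sq_opnorm_leD:
  assumes "sq_opnorm_le A c" and "A \<in> carrier_mat r d" and "x \<in> carrier_vec d"
  shows "sq_norm (A *\<^sub>v x) \<le> c * sq_norm x"
  using assms unfolding sq_opnorm_le_def by auto

lemma mult_mat_vec_nth:
  assumes "A \<in> carrier_mat n m" "v \<in> carrier_vec m" "i < n"
  shows "(A *\<^sub>v v) $ i = (\<Sum>j<m. A $$ (i, j) * v $ j)"
  using assms by (simp add: scalar_prod_def atLeast0LessThan)

lemma sq_norm_eq_sum: "v \<in> carrier_vec n \<Longrightarrow> sq_norm v = (\<Sum>i<n. (v $ i)\<^sup>2)"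
  by (simp add: scalar_prod_def atLeast0LessThan power2_eq_square)

lemma sq_norm_nonneg: "sq_norm (v :: real vec) \<ge> 0"
  using conjugate_square_ge_0_vec[of v] by simp

lemma sq_norm_pos_iff: "v \<in> carrier_vec n \<Longrightarrow> sq_norm v > 0 \<longleftrightarrow> v \<noteq> 0\<^sub>v n"
  using conjugate_square_greater_0_vec[of v n] by simp

lemma sq_norm_mult_mat_vec:
  assumes "A \<in> carrier_mat r c" and "y \<in> carrier_vec c"
  shows "sq_norm (A *\<^sub>v y) = y \<bullet> ((transpose_mat A * A) *\<^sub>v y)"
proof -
  have "sq_norm (A *\<^sub>v y) = (transpose_mat A *\<^sub>v (A *\<^sub>v y)) \<bullet> y"
    using transpose_vec_mult_scalar[of A r c y "A *\<^sub>v y"] assms by simp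
  also have "\<dots> = y \<bullet> ((transpose_mat A * A) *\<^sub>v y)"
    using assms by (simp add: assoc_mult_mat_vec[of _ c r _ c] comm_scalar_prod[of _ c])
  finally show ?thesis .
qed

lemma sq_norm_transpose_mult_mat_vec:
  assumes "A \<in> carrier_mat r c" and "y \<in> carrier_vec r"
  shows "sq_norm (transpose_mat A *\<^sub>v y) = y \<bullet> ((A * transpose_mat A) *\<^sub>v y)"
  using sq_norm_mult_mat_vec[of "transpose_mat A" c r y] assms by simp

lemma Cauchy_Schwarz_sum:
  fixes f g :: "'a \<Rightarrow> real"
  shows "(\<Sum>i\<in>S. f i * g i)\<^sup>2 \<le> (\<Sum>i\<in>S. (f i)\<^sup>2) * (\<Sum>i\<in>S. (g i)\<^sup>2)"
proof -
  have "0 \<le> (\<Sum>i\<in>S. \<Sum>j\<in>S. (f i * g j - f j * g i)\<^sup>2)"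
    by (intro sum_nonneg) auto
  also have "\<dots> = (\<Sum>i\<in>S. \<Sum>j\<in>S. (f i)\<^sup>2 * (g j)\<^sup>2 + (f j)\<^sup>2 * (g i)\<^sup>2 - 2 * ((f i * g i) * (f j * g j)))"
    by (intro sum.cong refl) (simp add: power2_eq_square algebra_simps)
  also have "\<dots> = (\<Sum>i\<in>S. \<Sum>j\<in>S. (f i)\<^sup>2 * (g j)\<^sup>2) + (\<Sum>i\<in>S. \<Sum>j\<in>S. (f j)\<^sup>2 * (g i)\<^sup>2)
      - 2 * (\<Sum>i\<in>S. \<Sum>j\<in>S. (f i * g i) * (f j * g j))"
    by (simp add: sum.distrib sum_subtractf sum_distrib_left)
  also have "(\<Sum>i\<in>S. \<Sum>j\<in>S. (f j)\<^sup>2 * (g i)\<^sup>2) = (\<Sum>i\<in>S. \<Sum>j\<in>S. (f i)\<^sup>2 * (g j)\<^sup>2)"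
    by (rule sum.swap)
  also have "(\<Sum>i\<in>S. \<Sum>j\<in>S. (f i)\<^sup>2 * (g j)\<^sup>2) = (\<Sum>i\<in>S. (f i)\<^sup>2) * (\<Sum>i\<in>S. (g i)\<^sup>2)"
    by (rule sum_product[symmetric])
  also have "(\<Sum>i\<in>S. \<Sum>j\<in>S. (f i * g i) * (f j * g j)) = (\<Sum>i\<in>S. f i * g i)\<^sup>2"
    by (simp add: power2_eq_square sum_product)
  finally show ?thesis by simp
qed

lemma Cauchy_Schwarz_scalar_prod:
  assumes "a \<in> carrier_vec n" "b \<in> carrier_vec n"
  shows "(a \<bullet> b)\<^sup>2 \<le> sq_norm a * sq_norm (b :: real vec)"
  using Cauchy_Schwarz_sum[of "\<lambda>i. a $ i" "\<lambda>i. b $ i" "{..<n}"] assms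
  by (simp add: scalar_prod_def atLeast0LessThan power2_eq_square)

lemma sq_opnorm_le_transpose:
  assumes A: "A \<in> carrier_mat r c" and "0 \<le> \<mu>" and "sq_opnorm_le A \<mu>"
  shows "sq_opnorm_le (transpose_mat A) \<mu>"
proof (rule sq_opnorm_leI)
  fix y :: "real vec" assume y: "y \<in> carrier_vec r"
  define u where "u = transpose_mat A *\<^sub>v y"
  have u: "u \<in> carrier_vec c" unfolding u_def using A y by simp
  have "sq_norm u = y \<bullet> (A *\<^sub>v u)"
    using transpose_vec_mult_scalar[OF A u y] by (simp add: u_def)
  then have "(sq_norm u)\<^sup>2 \<le> sq_norm y * sq_norm (A *\<^sub>v u)"
    using Cauchy_Schwarz_scalar_prod[OF y, of "A *\<^sub>v u"] A u by simp
  also have "\<dots> \<le> sq_norm y * (\<mu> * sq_norm u)"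
    using sq_opnorm_leD[OF assms(3) A u] by (intro mult_left_mono sq_norm_nonneg)
  finally have "sq_norm u * sq_norm u \<le> (\<mu> * sq_norm y) * sq_norm u"
    by (simp add: power2_eq_square mult_ac)
  then show "sq_norm (transpose_mat A *\<^sub>v y) \<le> \<mu> * sq_norm y"
    using \<open>0 \<le> \<mu>\<close> sq_norm_nonneg[of u] sq_norm_nonneg[of y] unfolding u_def[symmetric]
    by (cases "sq_norm u = 0") auto
qed (use A in simp)

lemma abs_quadratic_form_le_frob_norm:
  assumes E: "E \<in> carrier_mat d d" and y: "y \<in> carrier_vec d"
  shows "\<bar>y \<bullet> (E *\<^sub>v y)\<bar> \<le> frob_norm E * sq_norm y"
proof -
  let ?S = "{..<d} \<times> {..<d}"
  have pairs: "(\<Sum>i<d. \<Sum>j<d. g i j) = (\<Sum>p\<in>?S. g (fst p) (snd p))" for g :: "nat \<Rightarrow> nat \<Rightarrow> real"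
    by (subst sum.cartesian_product) (simp add: case_prod_beta)
  have "y \<bullet> (E *\<^sub>v y) = (\<Sum>i<d. \<Sum>j<d. E $$ (i, j) * (y $ i * y $ j))"
    using E y by (simp add: scalar_prod_def atLeast0LessThan sum_distrib_left mult_ac)
  also have "\<dots> = (\<Sum>p\<in>?S. E $$ p * (y $ fst p * y $ snd p))"
    by (simp add: pairs)
  finally have quad: "y \<bullet> (E *\<^sub>v y) = (\<Sum>p\<in>?S. E $$ p * (y $ fst p * y $ snd p))" .
  have frob: "(\<Sum>p\<in>?S. (E $$ p)\<^sup>2) = (frob_norm E)\<^sup>2"
    using E by (simp add: frob_norm_def pairs[of "\<lambda>i j. (E $$ (i, j))\<^sup>2"] sum_nonneg)
  have "(\<Sum>p\<in>?S. (y $ fst p * y $ snd p)\<^sup>2) = (\<Sum>i<d. (y $ i)\<^sup>2) * (\<Sum>j<d. (y $ j)\<^sup>2)"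
    by (simp add: pairs[of "\<lambda>i j. (y $ i)\<^sup>2 * (y $ j)\<^sup>2", symmetric] sum_product power_mult_distrib)
  also have "\<dots> = (sq_norm y)\<^sup>2" by (simp add: sq_norm_eq_sum[OF y] power2_eq_square)
  finally have yy: "(\<Sum>p\<in>?S. (y $ fst p * y $ snd p)\<^sup>2) = (sq_norm y)\<^sup>2" .
  have "(y \<bullet> (E *\<^sub>v y))\<^sup>2 \<le> (frob_norm E)\<^sup>2 * (\<Sum>p\<in>?S. (y $ fst p * y $ snd p)\<^sup>2)"
    unfolding quad frob[symmetric] by (rule Cauchy_Schwarz_sum)
  then have "(y \<bullet> (E *\<^sub>v y))\<^sup>2 \<le> (frob_norm E * sq_norm y)\<^sup>2"
    unfolding yy by (simp add: power_mult_distrib)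
  moreover have "frob_norm E * sq_norm y \<ge> 0"
    using sq_norm_nonneg[of y] by (simp add: frob_norm_def sum_nonneg)
  ultimately show ?thesis by (metis abs_le_square_iff abs_of_nonneg)
qed

lemma frob_norm_nonneg: "0 \<le> frob_norm A"
  unfolding frob_norm_def by (intro real_sqrt_ge_zero sum_nonneg) auto

lemma sq_opnorm_le_mono: "sq_opnorm_le A c \<Longrightarrow> c \<le> c' \<Longrightarrow> sq_opnorm_le A c'"
  unfolding sq_opnorm_le_def by (meson mult_right_mono order_trans sq_norm_nonneg)

lemma coisometry_mult_transpose:
  assumes P: "P \<in> carrier_mat K d" and PP: "P * transpose_mat P = c \<cdot>\<^sub>m 1\<^sub>m K"
    and z: "z \<in> carrier_vec K"
  shows "P *\<^sub>v (transpose_mat P *\<^sub>v z) = c \<cdot>\<^sub>v z"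
    and "sq_norm (transpose_mat P *\<^sub>v z) = c * sq_norm z"
proof -
  have "P *\<^sub>v (transpose_mat P *\<^sub>v z) = (P * transpose_mat P) *\<^sub>v z"
    using P z by (simp add: assoc_mult_mat_vec[of _ K d _ K])
  also have "\<dots> = c \<cdot>\<^sub>v z" unfolding PP using z by auto
  finally show "P *\<^sub>v (transpose_mat P *\<^sub>v z) = c \<cdot>\<^sub>v z" .
  have "(c \<cdot>\<^sub>m 1\<^sub>m K) *\<^sub>v z = c \<cdot>\<^sub>v z" using z by auto
  then show "sq_norm (transpose_mat P *\<^sub>v z) = c * sq_norm z"
    unfolding sq_norm_transpose_mult_mat_vec[OF P z] PP using z by simp
qed

lemma sq_opnorm_le_coisometry:
  assumes P: "P \<in> carrier_mat K d" and PP: "P * transpose_mat P = c \<cdot>\<^sub>m 1\<^sub>m K" and "0 \<le> c"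
  shows "sq_opnorm_le P c"
proof -
  have "sq_opnorm_le (transpose_mat P) c"
    using P coisometry_mult_transpose(2)[OF P PP] by (intro sq_opnorm_leI[of _ d K]) auto
  from sq_opnorm_le_transpose[OF _ \<open>0 \<le> c\<close> this] P show ?thesis by simp
qed

lemma sqrt_powr: "0 \<le> x \<Longrightarrow> sqrt x powr r = sqrt (x powr r)"
proof (cases "x = 0")
  case False
  assume "0 \<le> x"
  then have "sqrt x powr r = (x powr (1 / 2)) powr r" by (simp add: powr_half_sqrt)
  also have "\<dots> = x powr (r / 2)" by (simp add: powr_powr)
  also have "\<dots> = sqrt (x powr r)" using \<open>0 \<le> x\<close> by (rule powr_half_sqrt_powr)
  finally show ?thesis .
qed simp

lemma root_pow_cancel: "0 < x \<Longrightarrow> 0 < L \<Longrightarrow> (x powr (1 / real L)) ^ L = x"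
  by (simp add: powr_realpow[symmetric] powr_powr)

lemma one_plus_inverse_pow_le_two:
  assumes "1 \<le> L"
  shows "(1 + 1 / (15 * real L ^ 2)) ^ (L * L) \<le> 2"
proof -
  define b where "b = 1 / (15 * real L ^ 2)"
  have "(1 + b) ^ (L * L) \<le> exp b ^ (L * L)"
    by (rule power_mono) (auto simp: b_def exp_ge_add_one_self add_nonneg_nonneg)
  also have "\<dots> = exp (real (L * L) * b)" by (rule exp_of_nat_mult[symmetric])
  also have "real (L * L) * b = 1 / 15" using assms by (simp add: b_def power2_eq_square)
  also have "exp (1 / 15 :: real) \<le> exp (1 / 2)" by simp
  also have "\<dots> \<le> 2" by (rule exp_half_le2)
  finally show ?thesis unfolding b_def .
qed

lemma le_add_of_pow_mult_diff_le:
  fixes a e \<mu> :: real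
  assumes "0 < a" "0 \<le> e" and "\<mu> ^ m * (\<mu> - e) \<le> a ^ Suc m"
  shows "\<mu> \<le> a + e"
proof (rule ccontr)
  assume "\<not> \<mu> \<le> a + e"
  then have "a < \<mu> - e" "a \<le> \<mu>" using assms(2) by auto
  have "a ^ Suc m = a ^ m * a" by (simp add: mult.commute)
  also have "\<dots> < a ^ m * (\<mu> - e)" using \<open>a < \<mu> - e\<close> assms(1) by simp
  also have "\<dots> \<le> \<mu> ^ m * (\<mu> - e)"
    using \<open>a \<le> \<mu>\<close> \<open>a < \<mu> - e\<close> assms(1) by (intro mult_right_mono power_mono) auto
  finally show False using assms(3) by simp
qed

lemma balanced_scale_bounds:
  fixes \<mu> e c :: real and L :: nat
  assumes L: "2 \<le> L" and c: "0 < c" and \<mu>: "0 \<le> \<mu>" and e: "0 \<le> e"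
    and e_le: "e \<le> c powr (1 / real L) / (30 * real L ^ 2)"
    and top: "\<mu> ^ (L - 1) * (\<mu> - e) \<le> c"
  shows "\<mu> + e \<le> (2 * c) powr (1 / real L)"
    and "(c / 2) powr (1 / real L) * ((\<mu> + e) * \<mu> ^ (L - 2)) \<le> c"
proof -
  obtain j where j: "L = Suc (Suc j)" using L by (metis add_2_eq_Suc le_Suc_ex)
  define a where "a = c powr (1 / real L)"
  define t where "t = (2::real) powr (1 / real L)"
  \<comment> \<open>\<open>\<beta>\<close> absorbs the error \<open>e\<close>, and \<open>\<beta> ^ (L - 1) \<le> 2 powr (1 / L)\<close> because \<open>\<beta> ^ (L * L) \<le> exp (1 / 15)\<close>.\<close>
  define \<beta> where "\<beta> = 1 + 1 / (15 * real L ^ 2)"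
  have a: "0 < a" "a ^ L = c" unfolding a_def using c L by (simp_all add: root_pow_cancel)
  have t: "0 < t" "t ^ L = 2" unfolding t_def using L by (simp_all add: root_pow_cancel)
  have \<beta>: "1 \<le> \<beta>" unfolding \<beta>_def by simp
  have "\<mu> \<le> a + e"
    using top a j by (intro le_add_of_pow_mult_diff_le[OF a(1) e, of _ "Suc j"]) simp
  moreover have "a + 2 * e \<le> a * \<beta>" using e_le unfolding a_def[symmetric] \<beta>_def by (simp add: field_simps)
  ultimately have \<mu>e: "\<mu> + e \<le> a * \<beta>" using e by linarith
  have "(\<beta> ^ (L - 1)) ^ L = \<beta> ^ ((L - 1) * L)" by (simp add: power_mult)
  also have "\<dots> \<le> \<beta> ^ (L * L)" using \<beta> L by (intro power_increasing) auto
  also have "\<dots> \<le> t ^ L" unfolding t(2) \<beta>_def using L by (intro one_plus_inverse_pow_le_two) simp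
  finally have \<beta>t: "\<beta> ^ (L - 1) \<le> t"
    using t(1) j power_le_imp_le_base[of "\<beta> ^ (L - 1)" "Suc j" t] by simp
  have "\<beta> \<le> \<beta> ^ (L - 1)" using \<beta> L power_increasing[of 1 "L - 1" \<beta>] by simp
  then have "\<mu> + e \<le> a * t" using \<mu>e \<beta>t a(1) by (meson mult_left_mono less_imp_le order_trans)
  also have "a * t = (2 * c) powr (1 / real L)" unfolding a_def t_def using c by (simp add: powr_mult)
  finally show "\<mu> + e \<le> (2 * c) powr (1 / real L)" .
  have "(\<mu> + e) * \<mu> ^ (L - 2) \<le> (a * \<beta>) * (a * \<beta>) ^ (L - 2)"
    using \<mu>e \<mu> e by (intro mult_mono power_mono) auto
  also have "\<dots> = (a * \<beta>) ^ (L - 1)" using j by simp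
  finally have "a / t * ((\<mu> + e) * \<mu> ^ (L - 2)) \<le> a / t * (a * \<beta>) ^ (L - 1)"
    using a t by (intro mult_left_mono) auto
  also have "\<dots> = a ^ L * (\<beta> ^ (L - 1) / t)" using j t(1) by (simp add: power_mult_distrib field_simps)
  also have "\<dots> \<le> a ^ L"
    using \<beta>t t(1) a(1) by (intro mult_left_le) (simp_all add: divide_le_eq_1_pos)
  also have "a / t = (c / 2) powr (1 / real L)" unfolding a_def t_def using c by (simp add: powr_divide)
  finally show "(c / 2) powr (1 / real L) * ((\<mu> + e) * \<mu> ^ (L - 2)) \<le> c" unfolding a(2) .
qed

lemma mult_le_of_scaled_bounds:
  fixes a b c s C :: real
  assumes "c * a \<le> C * b" "s * C \<le> c" "0 < c" "0 \<le> C" "0 \<le> a" "0 \<le> b"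
  shows "s * a \<le> b"
proof (cases "C = 0")
  case True
  then show ?thesis using assms by (simp add: mult_le_0_iff)
next
  case False
  have "C * (s * a) \<le> c * a" using mult_right_mono[OF assms(2,5)] by (simp add: mult_ac)
  also have "\<dots> \<le> C * b" by fact
  finally show ?thesis using False assms(4) by (simp add: mult_le_cancel_left_pos)
qed

section \<open>Spectral theorem for real symmetric matrices\<close>

lemma real_symmetric_complex_eigenvalue_real:
  fixes A :: "real mat" and v :: "complex vec"
  assumes A: "A \<in> carrier_mat n n" and sym: "transpose_mat A = A"
    and v: "v \<in> carrier_vec n" "v \<noteq> 0\<^sub>v n"
    and ev: "map_mat complex_of_real A *\<^sub>v v = lam \<cdot>\<^sub>v v"
  shows "cnj lam = lam"
proof -
  have Ac: "map_mat complex_of_real A \<in> carrier_mat n n" using A by simp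
  have eq: "(\<Sum>j<n. complex_of_real (A $$ (i, j)) * v $ j) = lam * v $ i" if "i < n" for i
  proof -
    have "(map_mat complex_of_real A *\<^sub>v v) $ i = (lam \<cdot>\<^sub>v v) $ i" using ev by simp
    then show ?thesis using mult_mat_vec_nth[OF Ac v(1) that] that A v by simp
  qed
  have A_sym: "A $$ (i, j) = A $$ (j, i)" if "i < n" "j < n" for i j
    using sym that A by (metis carrier_matD index_transpose_mat(1))
  define S where "S = (\<Sum>i<n. cnj (v $ i) * (\<Sum>j<n. complex_of_real (A $$ (i, j)) * v $ j))"
  define N where "N = (\<Sum>i<n. (cmod (v $ i))\<^sup>2)"
  have "S = lam * (\<Sum>i<n. cnj (v $ i) * v $ i)"
    unfolding S_def using eq by (simp add: sum_distrib_left mult_ac)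
  also have "(\<Sum>i<n. cnj (v $ i) * v $ i) = complex_of_real N"
    unfolding N_def of_real_sum by (intro sum.cong refl) (metis complex_norm_square of_real_power mult.commute)
  finally have S_lam: "S = lam * complex_of_real N" .
  have "cnj S = (\<Sum>j<n. \<Sum>i<n. v $ i * complex_of_real (A $$ (i, j)) * cnj (v $ j))"
    unfolding S_def by (subst sum.swap) (simp add: sum_distrib_left mult_ac)
  also have "\<dots> = S"
    unfolding S_def by (auto simp: sum_distrib_left mult_ac A_sym intro!: sum.cong)
  finally have "cnj S = S" .
  moreover obtain k where k: "k < n" "v $ k \<noteq> 0"
    using v by (metis carrier_vecD eq_vecI index_zero_vec)
  then have "N > 0"
    unfolding N_def by (intro sum_pos2[of _ k]) auto
  ultimately show ?thesis
    using S_lam by (metis complex_cnj_complex_of_real complex_cnj_mult mult_cancel_right of_real_eq_0_iff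
        order_less_irrefl)
qed

lemma real_symmetric_has_eigenvector:
  fixes A :: "real mat"
  assumes A: "A \<in> carrier_mat n n" and sym: "transpose_mat A = A" and n: "n > 0"
  shows "\<exists>r v. v \<in> carrier_vec n \<and> v \<noteq> 0\<^sub>v n \<and> A *\<^sub>v v = r \<cdot>\<^sub>v v"
proof -
  let ?Ac = "map_mat complex_of_real A"
  have Ac: "?Ac \<in> carrier_mat n n" using A by simp
  obtain lam where "eigenvalue ?Ac lam"
    using spectrum_non_empty[OF Ac n] unfolding spectrum_def by auto
  then obtain v where v: "v \<in> carrier_vec n" "v \<noteq> 0\<^sub>v n" and ev: "?Ac *\<^sub>v v = lam \<cdot>\<^sub>v v"
    unfolding eigenvalue_def eigenvector_def using Ac by auto
  define r where "r = Re lam"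
  have lam: "lam = complex_of_real r"
    using real_symmetric_complex_eigenvalue_real[OF A sym v ev] unfolding r_def
    by (metis Reals_cnj_iff complex_is_Real_iff of_real_Re)
  have eq: "(\<Sum>j<n. complex_of_real (A $$ (i, j)) * v $ j) = lam * v $ i" if "i < n" for i
  proof -
    have "(?Ac *\<^sub>v v) $ i = (lam \<cdot>\<^sub>v v) $ i" using ev by simp
    then show ?thesis using mult_mat_vec_nth[OF Ac v(1) that] that A v by simp
  qed
  define a where "a = vec n (\<lambda>j. Re (v $ j))"
  define b where "b = vec n (\<lambda>j. Im (v $ j))"
  have "(\<Sum>j<n. A $$ (i, j) * Re (v $ j)) = r * Re (v $ i)"
    and "(\<Sum>j<n. A $$ (i, j) * Im (v $ j)) = r * Im (v $ i)" if "i < n" for i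
    using arg_cong[OF eq[OF that], of Re] arg_cong[OF eq[OF that], of Im]
    by (simp_all add: Re_sum Im_sum lam)
  then have "A *\<^sub>v a = r \<cdot>\<^sub>v a" "A *\<^sub>v b = r \<cdot>\<^sub>v b"
    using A by (auto intro!: eq_vecI simp: a_def b_def scalar_prod_def atLeast0LessThan)
  moreover have "a \<noteq> 0\<^sub>v n \<or> b \<noteq> 0\<^sub>v n"
  proof (rule ccontr)
    assume "\<not> ?thesis"
    then have "v $ i = 0" if "i < n" for i
      using that by (metis a_def b_def complex_eqI index_vec index_zero_vec(1) zero_complex.sel)
    then show False using v by (metis carrier_vecD eq_vecI index_zero_vec)
  qed
  moreover have "a \<in> carrier_vec n" "b \<in> carrier_vec n" by (simp_all add: a_def b_def)
  ultimately show ?thesis by blast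
qed

lemma householder_mat_involution:
  fixes u :: "nat \<Rightarrow> real"
  assumes uu: "c * (\<Sum>k<n. u k * u k) = 2"
  defines "H \<equiv> mat n n (\<lambda>(i, j). (if i = j then 1 else 0) - c * u i * u j)"
  shows "H * H = 1\<^sub>m n"
proof (rule eq_matI)
  fix i j assume "i < dim_row (1\<^sub>m n)" "j < dim_col (1\<^sub>m n)"
  then have i: "i < n" and j: "j < n" by auto
  have "(H * H) $$ (i, j) = (\<Sum>k<n. ((if i = k then 1 else 0) - c * u i * u k) * ((if k = j then 1 else 0) - c * u k * u j))"
    using i j by (simp add: H_def scalar_prod_def atLeast0LessThan)
  also have "\<dots> = (\<Sum>k<n. (if i = k then 1 else 0) * (if k = j then 1 else 0))
      - (\<Sum>k<n. (if i = k then 1 else 0) * (c * u k * u j))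
      - (\<Sum>k<n. (c * u i * u k) * (if k = j then 1 else 0))
      + c * c * u i * u j * (\<Sum>k<n. u k * u k)"
    by (simp add: algebra_simps sum.distrib sum_subtractf sum_distrib_left)
  also have "\<dots> = (if i = j then 1 else 0) - c * u i * u j - c * u i * u j
      + c * u i * u j * (c * (\<Sum>k<n. u k * u k))"
  proof -
    have "(if i = k then 1 else 0) * x = (if i = k then x else 0)"
      "x * (if k = j then 1 else 0) = (if k = j then x else 0)" for k and x :: real
      by simp_all
    then show ?thesis using i j by (simp only:) simp
  qed
  also have "\<dots> = 1\<^sub>m n $$ (i, j)" using uu i j by simp
  finally show "(H * H) $$ (i, j) = 1\<^sub>m n $$ (i, j)" .
qed (auto simp: H_def)

lemma householder_reflection_exists:
  fixes v :: "real vec"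
  assumes v: "v \<in> carrier_vec n" and v1: "sq_norm v = 1" and n: "n > 0"
  shows "\<exists>H \<in> carrier_mat n n. transpose_mat H = H \<and> H * H = 1\<^sub>m n \<and> H *\<^sub>v unit_vec n 0 = v"
proof (cases "v = unit_vec n 0")
  case True
  then show ?thesis by (intro bexI[of _ "1\<^sub>m n"]) (auto simp: v)
next
  case False
  then have v0: "v $ 0 \<noteq> 1"
  proof (rule contrapos_nn)
    assume v0: "v $ 0 = 1"
    have "(\<Sum>i<n. (v $ i)\<^sup>2) = (v $ 0)\<^sup>2 + (\<Sum>i\<in>{..<n} - {0}. (v $ i)\<^sup>2)"
      using n by (subst sum.remove[of _ 0]) auto
    then have "(\<Sum>i\<in>{..<n} - {0}. (v $ i)\<^sup>2) = 0"
      using v1 v0 sq_norm_eq_sum[OF v] by simp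
    then have "\<forall>i\<in>{..<n} - {0}. (v $ i)\<^sup>2 = 0"
      by (subst (asm) sum_nonneg_eq_0_iff) auto
    then show "v = unit_vec n 0" using v v0 by (intro eq_vecI) (auto simp: unit_vec_def)
  qed
  define u where "u i = v $ i - (if i = 0 then 1 else 0)" for i
  define c where "c = 1 / (1 - v $ 0)"
  have vv: "(\<Sum>k<n. v $ k * v $ k) = 1"
    using v1 sq_norm_eq_sum[OF v] by (simp add: power2_eq_square)
  have "(\<Sum>k<n. u k * u k) = (\<Sum>k<n. v $ k * v $ k) - 2 * (\<Sum>k<n. v $ k * (if k = 0 then 1 else 0))
      + (\<Sum>k<n. (if k = 0 then 1 else 0) * (if k = 0 then 1 else (0::real)))"
    unfolding u_def by (simp add: algebra_simps sum.distrib sum_subtractf sum_distrib_left)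
  also have "\<dots> = 2 * (1 - v $ 0)"
    using n vv by (simp add: if_distrib cong: if_cong)
  finally have uu: "c * (\<Sum>k<n. u k * u k) = 2" using v0 unfolding c_def by (simp add: field_simps)
  define H where "H = mat n n (\<lambda>(i, j). (if i = j then 1 else 0) - c * u i * u j)"
  have H: "H \<in> carrier_mat n n" unfolding H_def by simp
  have "transpose_mat H = H" unfolding H_def by (rule eq_matI) auto
  moreover have "H * H = 1\<^sub>m n" unfolding H_def using uu by (rule householder_mat_involution)
  moreover have "H *\<^sub>v unit_vec n 0 = v"
  proof (rule eq_vecI)
    fix i assume "i < dim_vec v"
    then have i: "i < n" using v by simp
    have "(H *\<^sub>v unit_vec n 0) $ i = (if i = 0 then 1 else 0) - c * u i * u 0"
      using i n by (simp add: H_def scalar_prod_def atLeast0LessThan unit_vec_def if_distrib cong: if_cong)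
    also have "\<dots> = v $ i" using v0 unfolding c_def u_def by (simp add: field_simps)
    finally show "(H *\<^sub>v unit_vec n 0) $ i = v $ i" .
  qed (use v H in auto)
  ultimately show ?thesis using H by blast
qed

lemma orthogonal_mat_mult_transpose: "orthogonal_mat n Q \<Longrightarrow> Q * transpose_mat Q = 1\<^sub>m n"
  unfolding orthogonal_mat_def using mat_mult_left_right_inverse[of "transpose_mat Q" n Q] by simp

lemma symmetric_mat_four_block_of_eigvec_unit_vec:
  fixes A :: "real mat"
  assumes A: "A \<in> carrier_mat (Suc m) (Suc m)" and sym: "transpose_mat A = A"
    and ev: "A *\<^sub>v unit_vec (Suc m) 0 = r \<cdot>\<^sub>v unit_vec (Suc m) 0"
  shows "\<exists>A' \<in> carrier_mat m m. transpose_mat A' = A' \<and>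
           A = four_block_mat (mat 1 1 (\<lambda>_. r)) (0\<^sub>m 1 m) (0\<^sub>m m 1) A'"
proof -
  have col0: "A $$ (i, 0) = (if i = 0 then r else 0)" if "i < Suc m" for i
    using arg_cong[OF ev, of "\<lambda>x. x $ i"] that A
    by (simp add: scalar_prod_def atLeast0LessThan unit_vec_def if_distrib cong: if_cong)
  have row0: "A $$ (0, j) = (if j = 0 then r else 0)" if "j < Suc m" for j
    using col0[OF that] sym A that by (metis carrier_matD index_transpose_mat(1) zero_less_Suc)
  define A' where "A' = mat m m (\<lambda>(i, j). A $$ (Suc i, Suc j))"
  have "transpose_mat A' = A'"
    unfolding A'_def by (rule eq_matI, insert sym A, auto) (metis Suc_mono carrier_matD index_transpose_mat(1))
  moreover have "A = four_block_mat (mat 1 1 (\<lambda>_. r)) (0\<^sub>m 1 m) (0\<^sub>m m 1) A'"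
    by (rule eq_matI, insert A col0 row0, auto simp: A'_def)
  ultimately show ?thesis unfolding A'_def by auto
qed

lemma orthogonal_diagonalization_four_block:
  fixes Q' D' :: "real mat" and r :: real
  assumes Q': "orthogonal_mat m Q'" and D': "D' \<in> carrier_mat m m" "diagonal_mat D'"
  shows "\<exists>Q D. orthogonal_mat (Suc m) Q \<and> D \<in> carrier_mat (Suc m) (Suc m) \<and> diagonal_mat D \<and>
    four_block_mat (mat 1 1 (\<lambda>_. r)) (0\<^sub>m 1 m) (0\<^sub>m m 1) (Q' * D' * transpose_mat Q')
      = Q * D * transpose_mat Q"
proof (intro exI conjI)
  define Q where "Q = four_block_mat (1\<^sub>m 1) (0\<^sub>m 1 m) (0\<^sub>m m 1) Q'"
  define D where "D = four_block_mat (mat 1 1 (\<lambda>_. r)) (0\<^sub>m 1 m) (0\<^sub>m m 1) D'"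
  have Q'c: "Q' \<in> carrier_mat m m" using Q' unfolding orthogonal_mat_def by simp
  have QT: "transpose_mat Q = four_block_mat (1\<^sub>m 1) (0\<^sub>m 1 m) (0\<^sub>m m 1) (transpose_mat Q')"
    unfolding Q_def using Q'c by (subst transpose_four_block_mat) auto
  show "orthogonal_mat (Suc m) Q"
    using Q' Q'c unfolding orthogonal_mat_def QT unfolding Q_def
    by (auto simp: mult_four_block_mat[of _ 1 1 _ m _ m _ _ 1 _ m])
  show "D \<in> carrier_mat (Suc m) (Suc m)" "diagonal_mat D"
    using D' unfolding D_def diagonal_mat_def by auto
  show "four_block_mat (mat 1 1 (\<lambda>_. r)) (0\<^sub>m 1 m) (0\<^sub>m m 1) (Q' * D' * transpose_mat Q')
      = Q * D * transpose_mat Q"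
    unfolding QT unfolding Q_def D_def using Q'c D'
    by (simp add: mult_four_block_mat[of _ 1 1 _ m _ m _ _ 1 _ m])
qed

lemma real_symmetric_has_unit_eigenvector:
  fixes A :: "real mat"
  assumes A: "A \<in> carrier_mat n n" and sym: "transpose_mat A = A" and n: "n > 0"
  shows "\<exists>r v. v \<in> carrier_vec n \<and> sq_norm v = 1 \<and> A *\<^sub>v v = r \<cdot>\<^sub>v v"
proof -
  obtain r w where w: "w \<in> carrier_vec n" "w \<noteq> 0\<^sub>v n" "A *\<^sub>v w = r \<cdot>\<^sub>v w"
    using real_symmetric_has_eigenvector[OF A sym n] by auto
  define v where "v = (1 / sqrt (sq_norm w)) \<cdot>\<^sub>v w"
  have "sq_norm w > 0" using sq_norm_pos_iff[OF w(1)] w(2) by simp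
  then have "v \<in> carrier_vec n" "sq_norm v = 1" "A *\<^sub>v v = r \<cdot>\<^sub>v v"
    using w A unfolding v_def
    by (auto simp: scalar_prod_smult_distrib[OF w(1)] mult_mat_vec smult_smult_assoc mult.commute)
  then show ?thesis by blast
qed

lemma symmetric_conj_involution_eigvec_unit_vec:
  fixes A H :: "real mat"
  assumes A: "A \<in> carrier_mat n n" "transpose_mat A = A"
    and H: "H \<in> carrier_mat n n" "transpose_mat H = H" "H * H = 1\<^sub>m n"
    and v: "v \<in> carrier_vec n" "A *\<^sub>v v = r \<cdot>\<^sub>v v" "H *\<^sub>v unit_vec n 0 = v"
  shows "transpose_mat (H * A * H) = H * A * H"
    and "(H * A * H) *\<^sub>v unit_vec n 0 = r \<cdot>\<^sub>v unit_vec n 0"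
proof -
  show "transpose_mat (H * A * H) = H * A * H"
    using H A by (simp add: transpose_mult[of _ n n _ n] assoc_mult_mat[of _ n n _ n _ n])
  have "H *\<^sub>v v = unit_vec n 0"
    using H v(3) by (metis assoc_mult_mat_vec one_mult_mat_vec unit_vec_carrier)
  moreover have "(H * A * H) *\<^sub>v unit_vec n 0 = H *\<^sub>v (A *\<^sub>v (H *\<^sub>v unit_vec n 0))"
    using H A by (simp add: assoc_mult_mat_vec[of _ n n _ n])
  ultimately show "(H * A * H) *\<^sub>v unit_vec n 0 = r \<cdot>\<^sub>v unit_vec n 0"
    using H v by (simp add: mult_mat_vec)
qed

lemma orthogonal_diagonalization_conj_involution:
  fixes A H B D :: "real mat"
  assumes H: "H \<in> carrier_mat n n" "transpose_mat H = H" "H * H = 1\<^sub>m n"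
    and A: "A \<in> carrier_mat n n" and B: "orthogonal_mat n B" and D: "D \<in> carrier_mat n n"
    and eq: "H * A * H = B * D * transpose_mat B"
  shows "orthogonal_mat n (H * B)" and "A = (H * B) * D * transpose_mat (H * B)"
proof -
  have Bc: "B \<in> carrier_mat n n" using B unfolding orthogonal_mat_def by simp
  have HH: "H * (H * X) = X" if "X \<in> carrier_mat n k" for X k
    using H that by (metis assoc_mult_mat left_mult_one_mat)
  have "transpose_mat (H * B) * (H * B) = transpose_mat B * (H * (H * B))"
    using H Bc by (simp add: transpose_mult[of _ n n _ n] assoc_mult_mat[of _ n n _ n _ n])
  then show "orthogonal_mat n (H * B)"
    using B Bc H HH[OF Bc] unfolding orthogonal_mat_def by simp
  have "(H * B) * D * transpose_mat (H * B) = H * (B * D * transpose_mat B) * H"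
    using H Bc D by (simp add: transpose_mult[of _ n n _ n] assoc_mult_mat[of _ n n _ n _ n])
  also have "\<dots> = A"
    unfolding eq[symmetric] using H A HH by (simp add: assoc_mult_mat[of _ n n _ n _ n])
  finally show "A = (H * B) * D * transpose_mat (H * B)" by simp
qed

theorem real_symmetric_orthogonally_diagonalizable:
  fixes A :: "real mat"
  assumes "A \<in> carrier_mat n n" and "transpose_mat A = A"
  shows "\<exists>Q D. orthogonal_mat n Q \<and> D \<in> carrier_mat n n \<and> diagonal_mat D \<and>
           A = Q * D * transpose_mat Q"
  using assms
proof (induction n arbitrary: A)
  case 0
  then show ?case
    by (intro exI[of _ "1\<^sub>m 0"] exI[of _ A]) (auto simp: orthogonal_mat_def diagonal_mat_def)
next
  case (Suc m)
  note A = Suc.prems(1) and sym = Suc.prems(2)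
  obtain r v where v: "v \<in> carrier_vec (Suc m)" "sq_norm v = 1" "A *\<^sub>v v = r \<cdot>\<^sub>v v"
    using real_symmetric_has_unit_eigenvector[OF A sym] by auto
  obtain H where H: "H \<in> carrier_mat (Suc m) (Suc m)" "transpose_mat H = H" "H * H = 1\<^sub>m (Suc m)"
    "H *\<^sub>v unit_vec (Suc m) 0 = v"
    using householder_reflection_exists[OF v(1,2)] by auto
  have HAH: "H * A * H \<in> carrier_mat (Suc m) (Suc m)" using H A by simp
  obtain A' where A': "A' \<in> carrier_mat m m" "transpose_mat A' = A'"
    and HAH_block: "H * A * H = four_block_mat (mat 1 1 (\<lambda>_. r)) (0\<^sub>m 1 m) (0\<^sub>m m 1) A'"
    using symmetric_mat_four_block_of_eigvec_unit_vec[OF HAH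
        symmetric_conj_involution_eigvec_unit_vec[OF A sym H(1-3) v(1,3) H(4)]] by blast
  obtain Q' D' where Q': "orthogonal_mat m Q'" "D' \<in> carrier_mat m m" "diagonal_mat D'"
    and A'_eq: "A' = Q' * D' * transpose_mat Q'"
    using Suc.IH[OF A'] by blast
  obtain B D where B: "orthogonal_mat (Suc m) B" and D: "D \<in> carrier_mat (Suc m) (Suc m)" "diagonal_mat D"
    and HAH_eq: "H * A * H = B * D * transpose_mat B"
    using orthogonal_diagonalization_four_block[OF Q', of r] unfolding HAH_block A'_eq by blast
  show ?case
    using orthogonal_diagonalization_conj_involution[OF H(1-3) A B D(1) HAH_eq] D by blast
qed

section \<open>Singular values from an orthogonal diagonalization of the Gram matrix\<close>

lemma proots_prod_linear_factors: "proots (\<Prod>a\<leftarrow>as. [:- a, 1:]) = mset (as :: real list)"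
proof (induction as)
  case (Cons a as)
  have "(\<Prod>a\<leftarrow>as. [:- a, 1:]) \<noteq> (0 :: real poly)"
    by (auto simp: prod_list_zero_iff)
  then have "proots ([:- a, 1:] * (\<Prod>a\<leftarrow>as. [:- a, 1:])) = proots [:- a, 1:] + proots (\<Prod>a\<leftarrow>as. [:- a, 1:])"
    by (intro proots_mult) auto
  then show ?case using Cons by (simp only: proots_linear_factor prod_list.Cons) simp
qed simp

lemma diagonal_mat_mult_vec_nth:
  fixes D :: "real mat"
  assumes D: "D \<in> carrier_mat n n" "diagonal_mat D" and z: "z \<in> carrier_vec n" and i: "i < n"
  shows "(D *\<^sub>v z) $ i = D $$ (i, i) * z $ i"
proof -
  have "(D *\<^sub>v z) $ i = (\<Sum>j<n. if j = i then D $$ (i, i) * z $ i else 0)"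
    unfolding mult_mat_vec_nth[OF D(1) z i] using D i by (intro sum.cong) (auto simp: diagonal_mat_def)
  then show ?thesis using i by simp
qed

lemma mat_with_zero_row_has_kernel:
  fixes C :: "real mat"
  assumes C: "C \<in> carrier_mat k k" and i: "i < k" and zero: "\<forall>l<k. C $$ (i, l) = 0"
  obtains z where "z \<in> carrier_vec k" "z \<noteq> 0\<^sub>v k" "C *\<^sub>v z = 0\<^sub>v k"
proof -
  have CT: "transpose_mat C \<in> carrier_mat k k" using C by simp
  have "transpose_mat C *\<^sub>v unit_vec k i = 0\<^sub>v k"
    using C i zero by (intro eq_vecI) (auto simp: scalar_prod_def atLeast0LessThan unit_vec_def
        if_distrib cong: if_cong)
  moreover have "unit_vec k i \<noteq> 0\<^sub>v k"
    using i by (metis index_unit_vec(1) index_zero_vec(1) zero_neq_one)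
  ultimately have "det (transpose_mat C) = 0"
    using det_0_iff_vec_prod_zero[OF CT] by (meson unit_vec_carrier)
  then have "det C = 0" using det_transpose[OF C] by simp
  then show ?thesis using det_0_iff_vec_prod_zero[OF C] that by blast
qed

lemma sorted_nth_ge_of_length_filter_ge:
  fixes xs :: "real list"
  assumes xs: "sorted xs" and k: "0 < k" "k \<le> length (filter (\<lambda>x. a \<le> x) xs)"
  shows "a \<le> xs ! (length xs - k)"
proof (rule ccontr)
  assume lt: "\<not> a \<le> xs ! (length xs - k)"
  have len: "k \<le> length xs" using k(2) length_filter_le[of "\<lambda>x. a \<le> x" xs] by linarith
  have below: "xs ! j < a" if "j \<le> length xs - k" for j
  proof -
    have "xs ! j \<le> xs ! (length xs - k)" using sorted_nth_mono[OF xs that] len k(1) by simp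
    then show ?thesis using lt by simp
  qed
  have "{j. j < length xs \<and> a \<le> xs ! j} \<subseteq> {length xs - k + 1..<length xs}"
  proof
    fix j assume "j \<in> {j. j < length xs \<and> a \<le> xs ! j}"
    then have "j < length xs" "a \<le> xs ! j" by simp_all
    moreover from this(2) have "\<not> j \<le> length xs - k" using below[of j] by linarith
    ultimately show "j \<in> {length xs - k + 1..<length xs}" by simp
  qed
  then have "card {j. j < length xs \<and> a \<le> xs ! j} \<le> card {length xs - k + 1..<length xs}"
    by (intro card_mono) simp_all
  also have "\<dots> = k - 1" using len k(1) by simp
  finally show False using k by (simp add: length_filter_conv_card)
qed

locale gram_diagonalization =
  fixes A Q D :: "real mat" and r d :: nat
  assumes A: "A \<in> carrier_mat r d" and Q: "orthogonal_mat d Q"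
    and D: "D \<in> carrier_mat d d" "diagonal_mat D"
    and gram: "transpose_mat A * A = Q * D * transpose_mat Q"
begin

lemma Q_carrier: "Q \<in> carrier_mat d d"
  using Q unfolding orthogonal_mat_def by simp

lemma singular_values_eq: "singular_values A = rev (sort (map sqrt (diag_mat D)))"
proof -
  have "similar_mat (transpose_mat A * A) D"
    using Q_carrier D A orthogonal_mat_mult_transpose[OF Q] Q unfolding gram orthogonal_mat_def
    by (intro similar_matI[of _ _ Q "transpose_mat Q" d]) auto
  then have "char_poly (transpose_mat A * A) = char_poly D" by (rule char_poly_similar)
  also have "\<dots> = (\<Prod>a\<leftarrow>diag_mat D. [:- a, 1:])"
    using D by (intro char_poly_upper_triangular) (auto simp: diagonal_mat_def upper_triangular_def)
  finally show ?thesis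
    unfolding singular_values_def by (simp add: proots_prod_linear_factors flip: mset_map)
qed

lemma sigma_eq:
  assumes "0 < i" "i \<le> d"
  shows "sigma i A = sort (map sqrt (diag_mat D)) ! (d - i)"
  using assms D(1) by (simp add: sigma_def singular_values_eq rev_nth diag_mat_def)

lemma sq_norm_eq:
  assumes y: "y \<in> carrier_vec d"
  shows "sq_norm y = (\<Sum>i<d. ((transpose_mat Q *\<^sub>v y) $ i)\<^sup>2)"
proof -
  have "sq_norm y = y \<bullet> ((Q * transpose_mat Q) *\<^sub>v y)"
    using orthogonal_mat_mult_transpose[OF Q] y by simp
  also have "\<dots> = sq_norm (transpose_mat Q *\<^sub>v y)"
    using sq_norm_transpose_mult_mat_vec[OF Q_carrier y] ..
  finally show ?thesis using y Q_carrier by (simp add: sq_norm_eq_sum[of _ d])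
qed

lemma sq_norm_mult_eq:
  assumes y: "y \<in> carrier_vec d"
  shows "sq_norm (A *\<^sub>v y) = (\<Sum>i<d. D $$ (i, i) * ((transpose_mat Q *\<^sub>v y) $ i)\<^sup>2)"
proof -
  define z where "z = transpose_mat Q *\<^sub>v y"
  have z: "z \<in> carrier_vec d" unfolding z_def using Q_carrier y by simp
  have "sq_norm (A *\<^sub>v y) = y \<bullet> (Q *\<^sub>v (D *\<^sub>v z))"
    using sq_norm_mult_mat_vec[OF A y] Q_carrier D y unfolding gram z_def
    by (simp add: assoc_mult_mat_vec[of _ d d _ d])
  also have "\<dots> = z \<bullet> (D *\<^sub>v z)"
    using transpose_vec_mult_scalar[of "transpose_mat Q" d d y "D *\<^sub>v z"] Q_carrier D z y
    by (simp add: z_def comm_scalar_prod[of _ d])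
  also have "\<dots> = (\<Sum>i<d. z $ i * (D *\<^sub>v z) $ i)"
    using z D(1) unfolding scalar_prod_def by (simp add: atLeast0LessThan)
  also have "\<dots> = (\<Sum>i<d. D $$ (i, i) * (z $ i)\<^sup>2)"
    by (rule sum.cong) (simp_all add: diagonal_mat_mult_vec_nth[OF D z] power2_eq_square)
  finally show ?thesis unfolding z_def .
qed

lemma Q_col_eigvec:
  assumes j: "j < d"
  shows "Q *\<^sub>v unit_vec d j \<in> carrier_vec d" "sq_norm (Q *\<^sub>v unit_vec d j) = 1"
    and "sq_norm (A *\<^sub>v (Q *\<^sub>v unit_vec d j)) = D $$ (j, j)"
    and "(transpose_mat A * A) *\<^sub>v (Q *\<^sub>v unit_vec d j) = D $$ (j, j) \<cdot>\<^sub>v (Q *\<^sub>v unit_vec d j)"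
proof -
  have e: "transpose_mat Q *\<^sub>v (Q *\<^sub>v unit_vec d j) = unit_vec d j"
    using Q Q_carrier unfolding orthogonal_mat_def
    by (metis assoc_mult_mat_vec carrier_matD(2) index_transpose_mat(3) one_mult_mat_vec
        transpose_carrier_mat unit_vec_carrier)
  have unit_sum: "(\<Sum>i<d. f i * (unit_vec d j $ i)\<^sup>2) = f j" for f :: "nat \<Rightarrow> real"
  proof -
    have "(\<Sum>i<d. f i * (unit_vec d j $ i)\<^sup>2) = (\<Sum>i<d. if i = j then f i else 0)"
      by (rule sum.cong) (auto simp: unit_vec_def)
    then show ?thesis using j by simp
  qed
  show "Q *\<^sub>v unit_vec d j \<in> carrier_vec d" using Q_carrier by simp
  then show "sq_norm (Q *\<^sub>v unit_vec d j) = 1" "sq_norm (A *\<^sub>v (Q *\<^sub>v unit_vec d j)) = D $$ (j, j)"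
    using unit_sum[of "\<lambda>_. 1"] unit_sum[of "\<lambda>i. D $$ (i, i)"] by (simp_all add: sq_norm_eq sq_norm_mult_eq e)
  have "D *\<^sub>v unit_vec d j = D $$ (j, j) \<cdot>\<^sub>v unit_vec d j"
    using D j by (intro eq_vecI) (auto simp: diagonal_mat_mult_vec_nth unit_vec_def simp del: index_mult_mat_vec)
  then show "(transpose_mat A * A) *\<^sub>v (Q *\<^sub>v unit_vec d j) = D $$ (j, j) \<cdot>\<^sub>v (Q *\<^sub>v unit_vec d j)"
    unfolding gram using Q_carrier D e by (simp add: assoc_mult_mat_vec[of _ d d _ d] mult_mat_vec)
qed

lemma diag_le_of_sq_opnorm_le:
  assumes "sq_opnorm_le A c" and "j < d"
  shows "D $$ (j, j) \<le> c"
  using sq_opnorm_leD[OF assms(1) A Q_col_eigvec(1)[OF assms(2)]] Q_col_eigvec[OF assms(2)] by simp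

lemma sq_opnorm_le_of_diag_le:
  assumes "\<And>j. j < d \<Longrightarrow> D $$ (j, j) \<le> c"
  shows "sq_opnorm_le A c"
proof (rule sq_opnorm_leI[OF A])
  fix y :: "real vec" assume y: "y \<in> carrier_vec d"
  have "sq_norm (A *\<^sub>v y) \<le> (\<Sum>i<d. c * ((transpose_mat Q *\<^sub>v y) $ i)\<^sup>2)"
    unfolding sq_norm_mult_eq[OF y] by (intro sum_mono mult_right_mono) (auto simp: assms)
  then show "sq_norm (A *\<^sub>v y) \<le> c * sq_norm y"
    by (simp add: sq_norm_eq[OF y] sum_distrib_left)
qed

lemma sq_norm_mult_lt_of_vanishing:
  assumes x: "x \<in> carrier_vec d" "x \<noteq> 0\<^sub>v d"
    and vanish: "\<And>i. i < d \<Longrightarrow> c \<le> D $$ (i, i) \<Longrightarrow> (transpose_mat Q *\<^sub>v x) $ i = 0"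
  shows "sq_norm (A *\<^sub>v x) < c * sq_norm x"
proof -
  define y where "y = transpose_mat Q *\<^sub>v x"
  have x_y: "sq_norm x = (\<Sum>i<d. (y $ i)\<^sup>2)" "sq_norm (A *\<^sub>v x) = (\<Sum>i<d. D $$ (i, i) * (y $ i)\<^sup>2)"
    unfolding y_def by (rule sq_norm_eq[OF x(1)], rule sq_norm_mult_eq[OF x(1)])
  obtain i1 where i1: "i1 < d" "y $ i1 \<noteq> 0"
  proof (rule ccontr)
    assume "\<not> thesis"
    then have "\<forall>i<d. y $ i = 0" using that by blast
    then have "sq_norm x = 0" unfolding x_y by simp
    then show False using sq_norm_pos_iff[OF x(1)] x(2) by simp
  qed
  show ?thesis
    unfolding x_y sum_distrib_left
  proof (rule sum_strict_mono_ex1)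
    show "\<forall>i\<in>{..<d}. D $$ (i, i) * (y $ i)\<^sup>2 \<le> c * (y $ i)\<^sup>2"
    proof
      fix i assume "i \<in> {..<d}"
      then show "D $$ (i, i) * (y $ i)\<^sup>2 \<le> c * (y $ i)\<^sup>2"
        using vanish[of i] unfolding y_def by (cases "c \<le> D $$ (i, i)") (auto intro!: mult_right_mono)
    qed
    have "D $$ (i1, i1) < c" using vanish i1 unfolding y_def by force
    then show "\<exists>i\<in>{..<d}. D $$ (i, i) * (y $ i)\<^sup>2 < c * (y $ i)\<^sup>2"
      using i1 by (intro bexI[of _ i1]) auto
  qed simp
qed

lemma card_diag_ge_of_lower_bound:
  assumes B: "B \<in> carrier_mat d k"
    and inj: "\<And>z. z \<in> carrier_vec k \<Longrightarrow> z \<noteq> 0\<^sub>v k \<Longrightarrow> B *\<^sub>v z \<noteq> 0\<^sub>v d"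
    and lower: "\<And>z. z \<in> carrier_vec k \<Longrightarrow> c * sq_norm (B *\<^sub>v z) \<le> sq_norm (A *\<^sub>v (B *\<^sub>v z))"
  shows "k \<le> card {i. i < d \<and> c \<le> D $$ (i, i)}"
proof (rule ccontr)
  define S where "S = {i. i < d \<and> c \<le> D $$ (i, i)}"
  assume "\<not> k \<le> card {i. i < d \<and> c \<le> D $$ (i, i)}"
  then have S_k: "card S < k" unfolding S_def by simp
  \<comment> \<open>The rows of \<open>Q\<^sup>T\<close> indexed by \<open>S\<close>, padded by zero rows to a \<open>k \<times> d\<close> matrix \<open>R\<close>,
    kill a nonzero vector of the range of \<open>B\<close>, on which \<open>A\<close> then shrinks below \<open>c\<close>.\<close>
  obtain f where f: "bij_betw f {0..<card S} S"
    using ex_bij_betw_nat_finite[of S] unfolding S_def by auto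
  define R where "R = mat k d (\<lambda>(j, i). if j < card S then transpose_mat Q $$ (f j, i) else 0)"
  have R: "R \<in> carrier_mat k d" unfolding R_def by simp
  have RB: "R * B \<in> carrier_mat k k" using R B by simp
  have "\<not> k - 1 < card S" using S_k by simp
  then have zero_row: "\<forall>l<k. (R * B) $$ (k - 1, l) = 0"
    using S_k B by (simp add: R_def scalar_prod_def)
  have "k - 1 < k" using S_k by simp
  then obtain z where z: "z \<in> carrier_vec k" "z \<noteq> 0\<^sub>v k" and Cz: "(R * B) *\<^sub>v z = 0\<^sub>v k"
    by (rule mat_with_zero_row_has_kernel[OF RB _ zero_row])
  define x where "x = B *\<^sub>v z"
  have x: "x \<in> carrier_vec d" "x \<noteq> 0\<^sub>v d" unfolding x_def using B z inj by auto
  have Rx: "R *\<^sub>v x = 0\<^sub>v k"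
    using Cz z R B unfolding x_def by (simp add: assoc_mult_mat_vec[of _ k d _ k])
  have "(transpose_mat Q *\<^sub>v x) $ i = 0" if "i < d" "c \<le> D $$ (i, i)" for i
  proof -
    have "i \<in> f ` {0..<card S}" using f that by (simp add: bij_betw_imp_surj_on S_def)
    then obtain j where j: "j < card S" "f j = i" by auto
    have "(R *\<^sub>v x) $ j = (\<Sum>l<d. R $$ (j, l) * x $ l)"
      using j S_k by (intro mult_mat_vec_nth[OF R x(1)]) simp
    also have "\<dots> = (\<Sum>l<d. transpose_mat Q $$ (i, l) * x $ l)"
      using j S_k by (intro sum.cong) (auto simp: R_def)
    also have "\<dots> = (transpose_mat Q *\<^sub>v x) $ i"
      using Q_carrier x \<open>i < d\<close> by (intro mult_mat_vec_nth[symmetric]) auto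
    finally show ?thesis using Rx j S_k by simp
  qed
  then have "sq_norm (A *\<^sub>v x) < c * sq_norm x" by (rule sq_norm_mult_lt_of_vanishing[OF x])
  then show False using lower[OF z(1)] unfolding x_def by simp
qed
end

lemma gram_diagonalization_exists:
  assumes "A \<in> carrier_mat r d"
  shows "\<exists>Q D. gram_diagonalization A Q D r d"
proof -
  have "transpose_mat (transpose_mat A * A) = transpose_mat A * A"
    using assms by (simp add: transpose_mult[of _ d r])
  then show ?thesis
    using real_symmetric_orthogonally_diagonalizable[of "transpose_mat A * A" d] assms
    unfolding gram_diagonalization_def by auto
qed

lemma sigma_le_of_sq_opnorm_le:
  assumes A: "A \<in> carrier_mat r d" and "sq_opnorm_le A c" and i: "0 < i" "i \<le> d"
  shows "sigma i A \<le> sqrt c"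
proof -
  obtain Q D where QD: "gram_diagonalization A Q D r d"
    using gram_diagonalization_exists[OF A] by blast
  interpret gram_diagonalization A Q D r d by (fact QD)
  have "sigma i A \<in> set (sort (map sqrt (diag_mat D)))"
    unfolding sigma_eq[OF i] using D(1) i by (intro nth_mem) (simp add: diag_mat_def)
  then obtain j where "j < d" "sigma i A = sqrt (D $$ (j, j))"
    using D(1) by (auto simp: diag_mat_def)
  then show ?thesis using diag_le_of_sq_opnorm_le[OF assms(2)] by simp
qed

lemma sigma_antimono:
  assumes A: "A \<in> carrier_mat r d" and ij: "0 < i" "i \<le> j" "j \<le> d"
  shows "sigma j A \<le> sigma i A"
proof -
  obtain Q D where QD: "gram_diagonalization A Q D r d"
    using gram_diagonalization_exists[OF A] by blast
  interpret gram_diagonalization A Q D r d by (fact QD)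
  have "sort (map sqrt (diag_mat D)) ! (d - j) \<le> sort (map sqrt (diag_mat D)) ! (d - i)"
    using ij D(1) by (intro sorted_nth_mono) (auto simp: diag_mat_def)
  then show ?thesis using sigma_eq ij by simp
qed

lemma sigma_ge_of_lower_bound:
  assumes A: "A \<in> carrier_mat r d" and B: "B \<in> carrier_mat d k" and k: "0 < k" "k \<le> d"
    and inj: "\<And>z. z \<in> carrier_vec k \<Longrightarrow> z \<noteq> 0\<^sub>v k \<Longrightarrow> B *\<^sub>v z \<noteq> 0\<^sub>v d"
    and lower: "\<And>z. z \<in> carrier_vec k \<Longrightarrow> c * sq_norm (B *\<^sub>v z) \<le> sq_norm (A *\<^sub>v (B *\<^sub>v z))"
  shows "sqrt c \<le> sigma k A"
proof -
  obtain Q D where QD: "gram_diagonalization A Q D r d"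
    using gram_diagonalization_exists[OF A] by blast
  interpret gram_diagonalization A Q D r d by (fact QD)
  define ds where "ds = map sqrt (diag_mat D)"
  have "k \<le> card {i. i < d \<and> c \<le> D $$ (i, i)}"
    by (rule card_diag_ge_of_lower_bound[OF B inj lower])
  also have "{i. i < d \<and> c \<le> D $$ (i, i)} = {i. i < length ds \<and> sqrt c \<le> ds ! i}"
    unfolding ds_def using D(1) by (auto simp: diag_mat_def)
  also have "card \<dots> = length (filter (\<lambda>x. sqrt c \<le> x) (sort ds))"
    by (metis length_filter_conv_card mset_filter mset_sort size_mset)
  finally have "sqrt c \<le> sort ds ! (length (sort ds) - k)"
    using k by (intro sorted_nth_ge_of_length_filter_ge) auto
  then show ?thesis
    unfolding sigma_eq[OF k] ds_def using D(1) by (simp add: diag_mat_def)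
qed

lemma top_eigenvector_exists:
  assumes A: "A \<in> carrier_mat r d" and d: "0 < d"
  shows "\<exists>x \<mu>. x \<in> carrier_vec d \<and> sq_norm x = 1 \<and> (transpose_mat A * A) *\<^sub>v x = \<mu> \<cdot>\<^sub>v x \<and>
    sq_opnorm_le A \<mu>"
proof -
  obtain Q D where QD: "gram_diagonalization A Q D r d"
    using gram_diagonalization_exists[OF A] by blast
  interpret gram_diagonalization A Q D r d by (fact QD)
  have fin: "finite ((\<lambda>i. D $$ (i, i)) ` {..<d})" "(\<lambda>i. D $$ (i, i)) ` {..<d} \<noteq> {}"
    using d by auto
  obtain j where j: "j < d" "D $$ (j, j) = Max ((\<lambda>i. D $$ (i, i)) ` {..<d})"
    using Max_in[OF fin] by auto
  have "sq_opnorm_le A (D $$ (j, j))"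
    unfolding j(2) by (intro sq_opnorm_le_of_diag_le Max_ge fin) auto
  then show ?thesis using Q_col_eigvec[OF j(1)] by blast
qed

section \<open>Balanced linear networks\<close>

lemma sq_opnorm_le_of_balanced:
  assumes A: "A \<in> carrier_mat d c" and B: "B \<in> carrier_mat r d"
    and balanced: "transpose_mat B * B = A * transpose_mat A"
    and "0 \<le> \<mu>" and "sq_opnorm_le A \<mu>"
  shows "sq_opnorm_le B \<mu>"
proof (rule sq_opnorm_leI[OF B])
  fix y :: "real vec" assume y: "y \<in> carrier_vec d"
  have "sq_norm (B *\<^sub>v y) = sq_norm (transpose_mat A *\<^sub>v y)"
    unfolding sq_norm_mult_mat_vec[OF B y] sq_norm_transpose_mult_mat_vec[OF A y] balanced ..
  also have "\<dots> \<le> \<mu> * sq_norm y"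
    using sq_opnorm_le_transpose[OF A assms(4,5)] A y by (intro sq_opnorm_leD) auto
  finally show "sq_norm (B *\<^sub>v y) \<le> \<mu> * sq_norm y" .
qed

lemma sq_norm_nearly_balanced:
  assumes A: "A \<in> carrier_mat d c" and B: "B \<in> carrier_mat r d" and y: "y \<in> carrier_vec d"
  shows "\<bar>sq_norm (B *\<^sub>v y) - sq_norm (transpose_mat A *\<^sub>v y)\<bar>
           \<le> frob_norm (transpose_mat B * B - A * transpose_mat A) * sq_norm y"
proof -
  have BB: "transpose_mat B * B \<in> carrier_mat d d" and AA: "A * transpose_mat A \<in> carrier_mat d d"
    using A B by auto
  have "sq_norm (B *\<^sub>v y) - sq_norm (transpose_mat A *\<^sub>v y)
      = y \<bullet> ((transpose_mat B * B - A * transpose_mat A) *\<^sub>v y)"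
    unfolding sq_norm_mult_mat_vec[OF B y] sq_norm_transpose_mult_mat_vec[OF A y]
    using BB AA y by (simp add: minus_mult_distrib_mat_vec scalar_prod_minus_distrib[of y d])
  then show ?thesis using abs_quadratic_form_le_frob_norm[OF minus_carrier_mat[OF AA] y] BB by simp
qed

lemma gram_eigvec_mult:
  assumes A: "A \<in> carrier_mat r c" and u: "u \<in> carrier_vec c"
    and ev: "(transpose_mat A * A) *\<^sub>v u = \<mu> \<cdot>\<^sub>v u"
  shows "(A * transpose_mat A) *\<^sub>v (A *\<^sub>v u) = \<mu> \<cdot>\<^sub>v (A *\<^sub>v u)"
    and "sq_norm (A *\<^sub>v u) = \<mu> * sq_norm u"
proof -
  have "(A * transpose_mat A) *\<^sub>v (A *\<^sub>v u) = A *\<^sub>v ((transpose_mat A * A) *\<^sub>v u)"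
    using A u by (simp add: assoc_mult_mat_vec[of _ r c _ r] assoc_mult_mat_vec[of _ c r _ c])
  then show "(A * transpose_mat A) *\<^sub>v (A *\<^sub>v u) = \<mu> \<cdot>\<^sub>v (A *\<^sub>v u)"
    using ev A u by (simp add: mult_mat_vec)
  show "sq_norm (A *\<^sub>v u) = \<mu> * sq_norm u"
    using sq_norm_mult_mat_vec[OF A u] ev u by simp
qed

lemma wprod_carrier:
  assumes "\<forall>l\<in>{1..<L}. W l \<in> carrier_mat d d" and "l < L"
  shows "wprod W l d \<in> carrier_mat d d"
  using assms(2)
proof (induction l)
  case (Suc l)
  have "W (Suc l) \<in> carrier_mat d d" using assms(1) Suc.prems by auto
  then show ?case using Suc by simp
qed simp

lemma wprod_last_carrier:
  assumes "\<forall>l\<in>{1..<L}. W l \<in> carrier_mat d d" and "W L \<in> carrier_mat K d" and "0 < L"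
  shows "wprod W L d \<in> carrier_mat K d"
  using assms wprod_carrier[OF assms(1), of "L - 1"] by (cases L) auto

locale balanced_network =
  fixes W :: "nat \<Rightarrow> real mat" and L d K :: nat and e \<mu> :: real
  assumes two_le_L: "2 \<le> L"
    and square_layers: "\<forall>l\<in>{1..<L}. W l \<in> carrier_mat d d"
    and last_layer: "W L \<in> carrier_mat K d"
    and balanced: "\<forall>l\<in>{1..L-2}. transpose_mat (W (l+1)) * W (l+1) = W l * transpose_mat (W l)"
    and nearly_balanced: "frob_norm (transpose_mat (W L) * W L - W (L-1) * transpose_mat (W (L-1))) \<le> e"
    and \<mu>_nonneg: "0 \<le> \<mu>"
    and first_layer_bound: "sq_opnorm_le (W 1) \<mu>"
begin

abbreviation P :: "nat \<Rightarrow> real mat" where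
  "P l \<equiv> wprod W l d"

lemma e_nonneg: "0 \<le> e"
  using nearly_balanced frob_norm_nonneg[of "transpose_mat (W L) * W L - W (L - 1) * transpose_mat (W (L - 1))"]
  by linarith

lemma W_carrier: "1 \<le> l \<Longrightarrow> l < L \<Longrightarrow> W l \<in> carrier_mat d d"
  using square_layers by auto

lemma P_carrier: "l < L \<Longrightarrow> P l \<in> carrier_mat d d"
  using wprod_carrier[OF square_layers] .

lemma P_last_carrier: "P L \<in> carrier_mat K d"
  using wprod_last_carrier[OF square_layers last_layer] two_le_L by simp

lemma P_Suc_mult_vec:
  assumes "Suc l \<le> L" and "v \<in> carrier_vec d"
  shows "P (Suc l) *\<^sub>v v = W (Suc l) *\<^sub>v (P l *\<^sub>v v)"
proof -
  have "W (Suc l) \<in> carrier_mat (if Suc l = L then K else d) d"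
    using assms(1) last_layer W_carrier[of "Suc l"] by auto
  then show ?thesis using assms P_carrier[of l] by (simp add: assoc_mult_mat_vec)
qed

lemma layer_bound: "1 \<le> l \<Longrightarrow> l < L \<Longrightarrow> sq_opnorm_le (W l) \<mu>"
proof (induction l)
  case (Suc l)
  show ?case
  proof (cases "l = 0")
    case True
    then show ?thesis using first_layer_bound by simp
  next
    case False
    then have "transpose_mat (W (Suc l)) * W (Suc l) = W l * transpose_mat (W l)"
      using balanced Suc.prems by auto
    then show ?thesis
      using Suc W_carrier[of l] W_carrier[of "Suc l"] False \<mu>_nonneg
      by (intro sq_opnorm_le_of_balanced[of "W l" d d "W (Suc l)" d]) auto
  qed
qed simp

lemma last_layer_bound: "sq_opnorm_le (W L) (\<mu> + e)"
proof (rule sq_opnorm_leI[OF last_layer])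
  fix y :: "real vec" assume y: "y \<in> carrier_vec d"
  have WL1: "W (L - 1) \<in> carrier_mat d d" using W_carrier two_le_L by simp
  have "sq_norm (W L *\<^sub>v y) \<le> sq_norm (transpose_mat (W (L - 1)) *\<^sub>v y) + e * sq_norm y"
    using sq_norm_nearly_balanced[OF WL1 last_layer y] nearly_balanced sq_norm_nonneg[of y]
    by (smt (verit) mult_right_mono)
  also have "sq_norm (transpose_mat (W (L - 1)) *\<^sub>v y) \<le> \<mu> * sq_norm y"
    using sq_opnorm_le_transpose[OF WL1 \<mu>_nonneg layer_bound] two_le_L WL1 y
    by (intro sq_opnorm_leD[of _ _ d d]) auto
  finally show "sq_norm (W L *\<^sub>v y) \<le> (\<mu> + e) * sq_norm y" by (simp add: algebra_simps)
qed

lemma sq_norm_P_growth: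
  assumes v: "v \<in> carrier_vec d" and "a \<le> b" "b < L"
  shows "sq_norm (P b *\<^sub>v v) \<le> \<mu> ^ (b - a) * sq_norm (P a *\<^sub>v v)"
  using assms(2,3)
proof (induction b)
  case (Suc b)
  show ?case
  proof (cases "a = Suc b")
    case False
    then have ab: "a \<le> b" "b < L" using Suc.prems by auto
    have Pb: "P b *\<^sub>v v \<in> carrier_vec d" using P_carrier[OF ab(2)] v by simp
    have "P (Suc b) *\<^sub>v v = W (Suc b) *\<^sub>v (P b *\<^sub>v v)"
      using P_Suc_mult_vec[of b v] Suc.prems v by simp
    also have "sq_norm \<dots> \<le> \<mu> * sq_norm (P b *\<^sub>v v)"
      using Suc.prems by (intro sq_opnorm_leD[OF layer_bound W_carrier Pb]) auto
    also have "\<dots> \<le> \<mu> * (\<mu> ^ (b - a) * sq_norm (P a *\<^sub>v v))"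
      using Suc.IH[OF ab] \<mu>_nonneg by (intro mult_left_mono) auto
    finally show ?thesis using ab by (simp add: Suc_diff_le)
  qed simp
qed simp

lemma sq_norm_P_last_le_growth:
  assumes v: "v \<in> carrier_vec d" and j: "j < L"
  shows "sq_norm (P L *\<^sub>v v) \<le> (\<mu> + e) * \<mu> ^ (L - 1 - j) * sq_norm (P j *\<^sub>v v)"
proof -
  have PL1: "P (L - 1) *\<^sub>v v \<in> carrier_vec d" using P_carrier[of "L - 1"] two_le_L v by simp
  have "P L *\<^sub>v v = W L *\<^sub>v (P (L - 1) *\<^sub>v v)"
    using P_Suc_mult_vec[of "L - 1" v] two_le_L v by simp
  then have "sq_norm (P L *\<^sub>v v) \<le> (\<mu> + e) * sq_norm (P (L - 1) *\<^sub>v v)"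
    using sq_opnorm_leD[OF last_layer_bound last_layer PL1] by simp
  also have "\<dots> \<le> (\<mu> + e) * (\<mu> ^ (L - 1 - j) * sq_norm (P j *\<^sub>v v))"
    using sq_norm_P_growth[OF v, of j "L - 1"] j \<mu>_nonneg e_nonneg by (intro mult_left_mono) auto
  finally show ?thesis by (simp add: mult_ac)
qed

lemma sq_norm_P_last_le:
  assumes v: "v \<in> carrier_vec d" and l: "1 \<le> l" "l \<le> L"
  shows "\<mu> ^ (l - 1) * sq_norm (P L *\<^sub>v v) \<le> (\<mu> + e) * \<mu> ^ (L - 2) * sq_norm (P l *\<^sub>v v)"
proof (cases "l = L")
  case True
  have "l - 1 = Suc (L - 2)" using True two_le_L by simp
  then have "\<mu> ^ (l - 1) \<le> (\<mu> + e) * \<mu> ^ (L - 2)"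
    using e_nonneg \<mu>_nonneg by (simp add: mult_right_mono)
  then show ?thesis using True by (simp add: mult_right_mono sq_norm_nonneg)
next
  case False
  have "\<mu> ^ (l - 1) * sq_norm (P L *\<^sub>v v)
      \<le> \<mu> ^ (l - 1) * ((\<mu> + e) * \<mu> ^ (L - 1 - l) * sq_norm (P l *\<^sub>v v))"
    using sq_norm_P_last_le_growth[OF v, of l] False l \<mu>_nonneg by (simp add: mult_left_mono)
  also have "\<dots> = (\<mu> + e) * (\<mu> ^ (l - 1) * \<mu> ^ (L - 1 - l)) * sq_norm (P l *\<^sub>v v)"
    by (simp add: mult_ac)
  also have "\<mu> ^ (l - 1) * \<mu> ^ (L - 1 - l) = \<mu> ^ (L - 2)"
    using l False by (simp add: power_add[symmetric])
  finally show ?thesis .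
qed

lemma P_mult_top_eigvec:
  assumes x: "x \<in> carrier_vec d" and ev: "(transpose_mat (W 1) * W 1) *\<^sub>v x = \<mu> \<cdot>\<^sub>v x"
  shows "1 \<le> k \<Longrightarrow> k < L \<Longrightarrow> (W k * transpose_mat (W k)) *\<^sub>v (P k *\<^sub>v x) = \<mu> \<cdot>\<^sub>v (P k *\<^sub>v x)
    \<and> sq_norm (P k *\<^sub>v x) = \<mu> ^ k * sq_norm x"
proof (induction k)
  case (Suc k)
  have Px: "P (Suc k) *\<^sub>v x = W (Suc k) *\<^sub>v (P k *\<^sub>v x)"
    using P_Suc_mult_vec[of k x] Suc.prems x by simp
  show ?case
  proof (cases "k = 0")
    case True
    then show ?thesis using gram_eigvec_mult[OF W_carrier x ev] Px Suc.prems x by simp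
  next
    case False
    have "k < L" using Suc.prems by simp
    then have u: "P k *\<^sub>v x \<in> carrier_vec d" using P_carrier[of k] x by simp
    have "transpose_mat (W (Suc k)) * W (Suc k) = W k * transpose_mat (W k)"
      using balanced Suc.prems False by auto
    then show ?thesis
      using gram_eigvec_mult[OF W_carrier u, of "Suc k"] Suc False Px by auto
  qed
qed simp

lemma top_eigval_bound:
  assumes x: "x \<in> carrier_vec d" "sq_norm x = 1"
    and ev: "(transpose_mat (W 1) * W 1) *\<^sub>v x = \<mu> \<cdot>\<^sub>v x"
  shows "\<mu> ^ (L - 1) * (\<mu> - e) \<le> sq_norm (P L *\<^sub>v x)"
proof -
  define u where "u = P (L - 1) *\<^sub>v x"
  have WL1: "W (L - 1) \<in> carrier_mat d d" using W_carrier two_le_L by simp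
  have u: "u \<in> carrier_vec d" unfolding u_def using P_carrier[of "L - 1"] two_le_L x by simp
  have eig: "(W (L - 1) * transpose_mat (W (L - 1))) *\<^sub>v u = \<mu> \<cdot>\<^sub>v u" "sq_norm u = \<mu> ^ (L - 1)"
    using P_mult_top_eigvec[OF x(1) ev, of "L - 1"] two_le_L x unfolding u_def by auto
  have L_Suc: "L = Suc (L - 1)" using two_le_L by simp
  have "sq_norm (transpose_mat (W (L - 1)) *\<^sub>v u) = \<mu> * \<mu> ^ (L - 1)"
    using sq_norm_transpose_mult_mat_vec[OF WL1 u] eig u by simp
  moreover have "P L *\<^sub>v x = W L *\<^sub>v u"
    unfolding u_def using P_Suc_mult_vec[of "L - 1" x] two_le_L x by simp
  moreover have "e * sq_norm u \<le> e * \<mu> ^ (L - 1)" using eig(2) by simp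
  ultimately show ?thesis
    using sq_norm_nearly_balanced[OF WL1 last_layer u] mult_right_mono[OF nearly_balanced sq_norm_nonneg[of u]]
    by (simp add: algebra_simps abs_le_iff)
qed

lemma layer_lower_bound:
  assumes v: "v \<in> carrier_vec d" and "0 \<le> c" and PLv: "sq_norm (P L *\<^sub>v v) = c * sq_norm v"
    and l: "1 \<le> l" "l \<le> L"
  shows "c * sq_norm (P (l - 1) *\<^sub>v v) \<le> (\<mu> + e) * \<mu> ^ (L - 2) * sq_norm (W l *\<^sub>v (P (l - 1) *\<^sub>v v))"
proof -
  have "c * sq_norm (P (l - 1) *\<^sub>v v) \<le> c * (\<mu> ^ (l - 1) * sq_norm v)"
    using sq_norm_P_growth[OF v, of 0 "l - 1"] l \<open>0 \<le> c\<close> v by (simp add: mult_left_mono)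
  also have "\<dots> = \<mu> ^ (l - 1) * sq_norm (P L *\<^sub>v v)" using PLv by simp
  also have "\<dots> \<le> (\<mu> + e) * \<mu> ^ (L - 2) * sq_norm (P l *\<^sub>v v)"
    by (rule sq_norm_P_last_le[OF v l])
  also have "P l *\<^sub>v v = W l *\<^sub>v (P (l - 1) *\<^sub>v v)"
    using P_Suc_mult_vec[of "l - 1" v] l v by simp
  finally show ?thesis .
qed

lemma layer_singular_values:
  assumes K: "0 < K" "K \<le> d" and c: "0 < c"
    and coisometry: "P L * transpose_mat (P L) = c \<cdot>\<^sub>m 1\<^sub>m K"
    and upper: "\<mu> + e \<le> t" and lower: "s * ((\<mu> + e) * \<mu> ^ (L - 2)) \<le> c"
    and l: "1 \<le> l" "l \<le> L"
  shows "sqrt s \<le> sigma K (W l)" "sigma 1 (W l) \<le> sqrt t"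
proof -
  define r where "r = (if l = L then K else d)"
  have Wl: "W l \<in> carrier_mat r d" unfolding r_def using W_carrier last_layer l by auto
  have "sq_opnorm_le (W l) (\<mu> + e)"
  proof (cases "l = L")
    case False
    then show ?thesis using l e_nonneg by (intro sq_opnorm_le_mono[OF layer_bound]) auto
  qed (use last_layer_bound in simp)
  then show "sigma 1 (W l) \<le> sqrt t"
    using Wl K upper by (intro sigma_le_of_sq_opnorm_le[of _ r d]) (auto intro: sq_opnorm_le_mono)
  define C where "C = (\<mu> + e) * \<mu> ^ (L - 2)"
  have C: "0 \<le> C" unfolding C_def using \<mu>_nonneg e_nonneg by simp
  \<comment> \<open>The range of \<open>B\<close> is the \<open>K\<close>-dimensional subspace on which \<open>W l\<close> is bounded below.\<close>
  define B where "B = P (l - 1) * transpose_mat (P L)"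
  have Pl1: "P (l - 1) \<in> carrier_mat d d" using P_carrier l by simp
  have B: "B \<in> carrier_mat d K" unfolding B_def using Pl1 P_last_carrier by simp
  have v: "transpose_mat (P L) *\<^sub>v z \<in> carrier_vec d"
    and B_z: "B *\<^sub>v z = P (l - 1) *\<^sub>v (transpose_mat (P L) *\<^sub>v z)"
    and PLv: "sq_norm (P L *\<^sub>v (transpose_mat (P L) *\<^sub>v z)) = c * sq_norm (transpose_mat (P L) *\<^sub>v z)"
    and vz: "sq_norm (transpose_mat (P L) *\<^sub>v z) = c * sq_norm z"
    if z: "z \<in> carrier_vec K" for z
  proof -
    show "transpose_mat (P L) *\<^sub>v z \<in> carrier_vec d" using P_last_carrier z by simp
    show "B *\<^sub>v z = P (l - 1) *\<^sub>v (transpose_mat (P L) *\<^sub>v z)"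
      unfolding B_def using Pl1 P_last_carrier z by (simp add: assoc_mult_mat_vec[of _ d d _ K])
    show vz: "sq_norm (transpose_mat (P L) *\<^sub>v z) = c * sq_norm z"
      by (rule coisometry_mult_transpose(2)[OF P_last_carrier coisometry z])
    show "sq_norm (P L *\<^sub>v (transpose_mat (P L) *\<^sub>v z)) = c * sq_norm (transpose_mat (P L) *\<^sub>v z)"
      unfolding coisometry_mult_transpose(1)[OF P_last_carrier coisometry z] vz by simp
  qed
  show "sqrt s \<le> sigma K (W l)"
  proof (rule sigma_ge_of_lower_bound[OF Wl B K])
    fix z :: "real vec" assume z: "z \<in> carrier_vec K" "z \<noteq> 0\<^sub>v K"
    have "0 < c * (c * sq_norm z)" using c sq_norm_pos_iff[OF z(1)] z(2) by simp
    also have "c * (c * sq_norm z) \<le> (\<mu> + e) * \<mu> ^ (L - 1 - (l - 1)) * sq_norm (B *\<^sub>v z)"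
      using sq_norm_P_last_le_growth[OF v[OF z(1)], of "l - 1"] l
      unfolding B_z[OF z(1)] PLv[OF z(1)] vz[OF z(1)] by simp
    finally show "B *\<^sub>v z \<noteq> 0\<^sub>v d" by auto
  next
    fix z :: "real vec" assume z: "z \<in> carrier_vec K"
    have "c * sq_norm (B *\<^sub>v z) \<le> C * sq_norm (W l *\<^sub>v (B *\<^sub>v z))"
      unfolding B_z[OF z] C_def using layer_lower_bound[OF v[OF z] _ PLv[OF z] l] c by simp
    then show "s * sq_norm (B *\<^sub>v z) \<le> sq_norm (W l *\<^sub>v (B *\<^sub>v z))"
      using lower c C sq_norm_nonneg[of "B *\<^sub>v z"] sq_norm_nonneg[of "W l *\<^sub>v (B *\<^sub>v z)"]
      unfolding C_def[symmetric] by (rule mult_le_of_scaled_bounds)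
  qed
qed

end

section \<open>Deep linear networks fitting a balanced label matrix\<close>

lemma coisometry_singular_values:
  assumes P: "P \<in> carrier_mat K d" and PP: "P * transpose_mat P = c \<cdot>\<^sub>m 1\<^sub>m K"
    and c: "0 < c" and K: "0 < K" "K \<le> d"
  shows "sqrt c \<le> sigma K P" "sigma 1 P \<le> sqrt c"
proof -
  show "sigma 1 P \<le> sqrt c"
    using sq_opnorm_le_coisometry[OF P PP] P c K by (intro sigma_le_of_sq_opnorm_le) auto
  have PT: "transpose_mat P \<in> carrier_mat d K" using P by simp
  show "sqrt c \<le> sigma K P"
  proof (rule sigma_ge_of_lower_bound[OF P PT K])
    fix z :: "real vec" assume z: "z \<in> carrier_vec K" "z \<noteq> 0\<^sub>v K"
    then have "0 < sq_norm (transpose_mat P *\<^sub>v z)"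
      using coisometry_mult_transpose(2)[OF P PP z(1)] sq_norm_pos_iff[OF z(1)] c by simp
    then show "transpose_mat P *\<^sub>v z \<noteq> 0\<^sub>v d" by auto
  next
    fix z :: "real vec" assume z: "z \<in> carrier_vec K"
    show "c * sq_norm (transpose_mat P *\<^sub>v z) \<le> sq_norm (P *\<^sub>v (transpose_mat P *\<^sub>v z))"
      using coisometry_mult_transpose[OF P PP z] by simp
  qed
qed

theorem deep_network_singular_values:
  fixes W :: "nat \<Rightarrow> real mat" and L d K :: nat and c e :: real
  assumes L: "0 < L" and K: "0 < K" "K \<le> d" and c: "0 < c"
    and square_layers: "\<forall>l\<in>{1..<L}. W l \<in> carrier_mat d d"
    and last_layer: "W L \<in> carrier_mat K d"
    and balanced: "\<forall>l\<in>{1..L-2}. transpose_mat (W (l+1)) * W (l+1) = W l * transpose_mat (W l)"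
    and nearly_balanced: "frob_norm (transpose_mat (W L) * W L - W (L-1) * transpose_mat (W (L-1))) \<le> e"
    and e_le: "e \<le> c powr (1 / real L) / (30 * real L ^ 2)"
    and coisometry: "wprod W L d * transpose_mat (wprod W L d) = c \<cdot>\<^sub>m 1\<^sub>m K"
  shows "\<forall>l\<in>{1..L}. sqrt (c / 2) powr (1 / real L) \<le> sigma K (W l)
           \<and> sigma K (W l) \<le> sigma 1 (W l)
           \<and> sigma 1 (W l) \<le> sqrt (2 * c) powr (1 / real L)"
proof (intro ballI conjI)
  fix l assume l: "l \<in> {1..L}"
  have "W l \<in> carrier_mat (if l = L then K else d) d" using square_layers last_layer l by auto
  then show "sigma K (W l) \<le> sigma 1 (W l)" using K by (intro sigma_antimono) auto
  have "sqrt (c / 2) powr (1 / real L) \<le> sigma K (W l) \<and> sigma 1 (W l) \<le> sqrt (2 * c) powr (1 / real L)"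
  proof (cases "L = 1")
    case True
    then have Wl: "W l = wprod W L d" using l last_layer by auto
    note bounds = coisometry_singular_values[OF wprod_last_carrier[OF square_layers last_layer L] coisometry c K]
    have "sqrt (c / 2) \<le> sqrt c" "sqrt c \<le> sqrt (2 * c)" using c by simp_all
    then show ?thesis
      using order_trans[OF _ bounds(1)] order_trans[OF bounds(2)] True unfolding Wl by simp
  next
    case False
    then have two_le_L: "2 \<le> L" using L by simp
    have W1: "W 1 \<in> carrier_mat d d" using square_layers two_le_L by simp
    obtain x \<mu> where x: "x \<in> carrier_vec d" "sq_norm x = 1"
      and ev: "(transpose_mat (W 1) * W 1) *\<^sub>v x = \<mu> \<cdot>\<^sub>v x" and first: "sq_opnorm_le (W 1) \<mu>"
      using top_eigenvector_exists[OF W1] K by auto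
    have "0 \<le> \<mu>" using gram_eigvec_mult(2)[OF W1 x(1) ev] x(2) sq_norm_nonneg[of "W 1 *\<^sub>v x"] by simp
    then interpret balanced_network W L d K e \<mu>
      using two_le_L square_layers last_layer balanced nearly_balanced first by unfold_locales
    have "\<mu> ^ (L - 1) * (\<mu> - e) \<le> c"
      using top_eigval_bound[OF x ev] sq_opnorm_leD[OF sq_opnorm_le_coisometry[OF P_last_carrier
          coisometry c[THEN less_imp_le]] P_last_carrier x(1)] x(2) by simp
    note scale = balanced_scale_bounds[OF two_le_L c \<open>0 \<le> \<mu>\<close> e_nonneg e_le this]
    show ?thesis
      using layer_singular_values[OF K c coisometry scale] l c
      by (simp add: sqrt_powr)
  qed
  then show "sqrt (c / 2) powr (1 / real L) \<le> sigma K (W l)" "sigma 1 (W l) \<le> sqrt (2 * c) powr (1 / real L)"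
    by simp_all
qed

lemma card_label_class:
  assumes n: "0 < n" and i: "i < K"
  shows "card {j. j < n * K \<and> j div n = i} = n"
proof -
  have in_class: "j div n = i \<longleftrightarrow> i * n \<le> j \<and> j < i * n + n" for j
    using n by (metis add.commute div_nat_eqI div_times_less_eq_dividend dividend_less_div_times
        mult.commute mult_Suc)
  have "i * n + n \<le> K * n" using i by (metis Suc_leI add.commute mult_Suc mult_le_mono1)
  then have "{j. j < n * K \<and> j div n = i} = {i * n..<i * n + n}"
    unfolding in_class by (auto simp: mult.commute)
  then show ?thesis by simp
qed

lemma label_mat_mult_transpose:
  assumes "0 < n"
  shows "label_mat K n * transpose_mat (label_mat K n) = real n \<cdot>\<^sub>m 1\<^sub>m K"
proof (rule eq_matI)
  fix i i' assume "i < dim_row (real n \<cdot>\<^sub>m 1\<^sub>m K)" "i' < dim_col (real n \<cdot>\<^sub>m 1\<^sub>m K)"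
  then have i: "i < K" "i' < K" by auto
  have "(label_mat K n * transpose_mat (label_mat K n)) $$ (i, i') =
     (\<Sum>j<n * K. (if j div n = i then 1 else 0) * (if j div n = i' then 1 else (0::real)))"
    using i by (simp add: label_mat_def scalar_prod_def atLeast0LessThan)
  also have "\<dots> = (\<Sum>j\<in>{j. j < n * K \<and> j div n = i}. if i = i' then 1 else 0)"
    by (rule sum.mono_neutral_cong_right) auto
  also have "\<dots> = (real n \<cdot>\<^sub>m 1\<^sub>m K) $$ (i, i')"
    using card_label_class[OF assms i(1)] i by simp
  finally show "(label_mat K n * transpose_mat (label_mat K n)) $$ (i, i') = (real n \<cdot>\<^sub>m 1\<^sub>m K) $$ (i, i')" .
qed (auto simp: label_mat_def)

lemma mult_transpose_eq_of_orthogonal: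
  assumes P: "P \<in> carrier_mat K d" and X: "orthogonal_mat d X" and PX: "P * X = Y"
  shows "P * transpose_mat P = Y * transpose_mat Y"
proof -
  have Xc: "X \<in> carrier_mat d d" using X unfolding orthogonal_mat_def by simp
  have "P * transpose_mat P = P * (X * transpose_mat X) * transpose_mat P"
    using P orthogonal_mat_mult_transpose[OF X] by simp
  also have "\<dots> = Y * transpose_mat Y"
    unfolding PX[symmetric] using P Xc
    by (simp add: transpose_mult[of _ K d _ d] assoc_mult_mat[of _ K d _ d _ K]
        assoc_mult_mat[of _ K d _ d _ d] assoc_mult_mat[of _ d d _ d _ K])
  finally show ?thesis .
qed

lemma epsilon_sq_tolerance_le:
  fixes \<epsilon> n s :: real
  assumes "0 \<le> \<epsilon>" "0 < s" "0 < L"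
    and \<epsilon>_le: "\<epsilon> \<le> n powr (1 / (2 * real L)) / (sqrt 30 * real L * s powr (1/4))"
  shows "\<epsilon>\<^sup>2 * sqrt s \<le> n powr (1 / real L) / (30 * real L ^ 2)"
proof -
  have q: "(s powr (1/4))\<^sup>2 = sqrt s"
    using \<open>0 < s\<close> by (simp add: power2_eq_square powr_add[symmetric] powr_half_sqrt[symmetric])
  have a: "(n powr (1 / (2 * real L)))\<^sup>2 = n powr (1 / real L)"
    by (simp add: power2_eq_square powr_add[symmetric])
  have "\<epsilon>\<^sup>2 \<le> (n powr (1 / (2 * real L)) / (sqrt 30 * real L * s powr (1/4)))\<^sup>2"
    using assms(1) \<epsilon>_le by (intro power_mono) auto
  also have "\<dots> = n powr (1 / real L) / (30 * real L ^ 2 * sqrt s)"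
    using q a by (simp add: power_divide power_mult_distrib)
  finally have "\<epsilon>\<^sup>2 * sqrt s \<le> n powr (1 / real L) / (30 * real L ^ 2 * sqrt s) * sqrt s"
    by (rule mult_right_mono) (use \<open>0 < s\<close> in simp)
  also have "\<dots> = n powr (1 / real L) / (30 * real L ^ 2)" using \<open>0 < s\<close> by simp
  finally show ?thesis .
qed

theorem lemma3:
  fixes K n L d :: nat and X :: "real mat" and W :: "nat \<Rightarrow> real mat" and \<epsilon> :: real
  assumes "K > 0" and "n > 0" and "L > 0"
    and d_def: "d = n * K"
    and "d > K"
    and "orthogonal_mat d X"
    and "\<forall>l\<in>{1..<L}. W l \<in> carrier_mat d d"
    and "W L \<in> carrier_mat K d"
    and "wprod W L d * X = label_mat K n"
    and "\<epsilon> > 0"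
    and "\<epsilon> \<le> real n powr (1 / (2 * real L)) / (sqrt 30 * real L * (real d - real K) powr (1/4))"
    and "\<epsilon> \<le> (real n / 2) powr (1 / (4 * real L)) / (real d - real K) powr (1/4)"
    and "\<epsilon> \<le> 1 / sqrt (2 * (sqrt (real K) + 1))"
    and "\<forall>l\<in>{1..L-2}. transpose_mat (W (l+1)) * W (l+1) = W l * transpose_mat (W l)"
    and "frob_norm (transpose_mat (W L) * W L - W (L-1) * transpose_mat (W (L-1)))
           \<le> \<epsilon>^2 * sqrt (real d - real K)"
  shows "\<forall>l\<in>{1..L}. sqrt (real n / 2) powr (1 / real L) \<le> sigma K (W l)
            \<and> sigma K (W l) \<le> sigma 1 (W l)
            \<and> sigma 1 (W l) \<le> sqrt (2 * real n) powr (1 / real L)"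
proof -
  note K = assms(1) and n = assms(2) and L = assms(3) and dK = assms(5)
  have Kd: "0 < K" "K \<le> d" using K dK by simp_all
  have P: "wprod W L d \<in> carrier_mat K d"
    using wprod_last_carrier[OF assms(7,8) L] .
  have coisometry: "wprod W L d * transpose_mat (wprod W L d) = real n \<cdot>\<^sub>m 1\<^sub>m K"
    using mult_transpose_eq_of_orthogonal[OF P assms(6,9)] label_mat_mult_transpose[OF n] by simp
  have e_le: "\<epsilon>\<^sup>2 * sqrt (real d - real K) \<le> real n powr (1 / real L) / (30 * real L ^ 2)"
    using assms(10,11) dK L by (intro epsilon_sq_tolerance_le) auto
  show ?thesis
    by (rule deep_network_singular_values[OF L Kd _ assms(7,8,14,15) e_le coisometry]) (use n in simp)
qed

end
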